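(* Let $\mathcal{A}$ be a central and essential arrangement in $\mathbb{Q}^l$ as in the context, let $1\le i_1<\dots<i_l\le n$, let $\sigma$ be a term ordering, and let $p$ be a prime that is good for $\mathcal{A}$ and $\sigma$-lucky for the ideal $I_{\mathbb{Z}}=\langle\alpha_{i_1},\dots,\alpha_{i_l}\rangle\subseteq\mathbb{Z}[x_1,\dots,x_l]$. Then $(i_1,\dots,i_l)\in\mathfrak{I}(\mathcal{A})$ if and only if $(i_1,\dots,i_l)\in\mathfrak{I}(\mathcal{A}_p)$.
   Context: $\mathcal{A}=\{H_1,\dots,H_n\}$ is an arrangement of $n$ distinct, linearly ordered linear hyperplanes in $\mathbb{Q}^l$ with $\bigcap_iH_i=\{0\}$. $H_i=\{\alpha_i=0\}$ with $\alpha_i\in\mathbb{Z}[x_1,\dots,x_l]$ a nonzero linear form whose coefficients are not all divisible by any prime; $Q(\mathcal{A})=\prod\alpha_i$. $\pi_p$ denotes reduction mod $p$, $(\alpha_i)_p=\pi_p(\alpha_i)$; $p$ is good if $\pi_p(Q(\mathcal{A}))$ is reduced (no $(\alpha_i)_p$ is a scalar multiple of $(\alpha_j)_p$, $i<j$), and then $\mathcal{A}_p=\{(H_1)_p,\dots,(H_n)_p\}$ in $\mathbb{F}_p^l$, $(H_i)_p=\{(\alpha_i)_p=0\}$. For an arrangement $\{G_1,\dots,G_n\}$ in $K^l$, $\mathfrak{I}=\{(i_1,\dots,i_l): i_1<\dots<i_l,\ \dim(G_{i_1}\cap\dots\cap G_{i_l})=0\}$. Gröbner notions: for a term ordering $\sigma$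 and nonzero $f\in\mathbb{Z}[x_1,\dots,x_l]$, $\mathrm{LT}_\sigma(f)$ is the $\sigma$-largest term in the support of $f$, $\mathrm{LC}_\sigma(f)$ its coefficient, $\mathrm{LM}_\sigma(f)=\mathrm{LC}_\sigma(f)\mathrm{LT}_\sigma(f)$. A finite set $G$ of nonzero elements of an ideal $I\subseteq\mathbb{Z}[x_1,\dots,x_l]$ is a minimal strong $\sigma$-Gröbner basis of $I$ if $G$ generates $I$, for every nonzero $f\in I$ some $\mathrm{LM}_\sigma(g)$, $g\in G$, divides $\mathrm{LM}_\sigma(f)$, and no $\mathrm{LM}_\sigma(g)$ divides $\mathrm{LM}_\sigma(g')$ for distinct $g,g'\in G$. Such bases exist for nonzero $I$ and the set of their leading coefficients does not depend on the choice. A prime $p$ is $\sigma$-lucky for $I$ if $p$ divides no leading coefficient of an element of a minimal strong $\sigma$-Gröbner basis of $I$. *)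

theory Defs
  imports Complex_Main "HOL-Library.Poly_Mapping" "HOL-Computational_Algebra.Primes"
begin

text \<open>The ring Z[x_1,...,x_l] is represented (0-indexed) by the polynomials
  whose monomials only involve the variables 0,...,l-1.\<close>

type_synonym mono = "nat \<Rightarrow>\<^sub>0 nat"
type_synonym zpoly = "mono \<Rightarrow>\<^sub>0 int"

definition mon_set :: "nat \<Rightarrow> mono set" where
  "mon_set l = {m. \<forall>v\<in>Poly_Mapping.keys m. v < l}"

definition zpolys :: "nat \<Rightarrow> zpoly set" where
  "zpolys l = {f. \<forall>m\<in>Poly_Mapping.keys f. m \<in> mon_set l}"

definition var :: "nat \<Rightarrow> zpoly" where
  "var k = Poly_Mapping.single (Poly_Mapping.single k 1) 1"

definition lin_form :: "nat \<Rightarrow> (nat \<Rightarrow> nat \<Rightarrow> int) \<Rightarrow> nat \<Rightarrow> zpoly" where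
  "lin_form l a i = (\<Sum>k<l. Poly_Mapping.single 0 (a i k) * var k)"

definition ideal_gen :: "nat \<Rightarrow> zpoly set \<Rightarrow> zpoly set" where
  "ideal_gen l G = {f. \<exists>c. (\<forall>g\<in>G. c g \<in> zpolys l) \<and> f = (\<Sum>g\<in>G. c g * g)}"

definition term_order :: "nat \<Rightarrow> (mono \<Rightarrow> mono \<Rightarrow> bool) \<Rightarrow> bool" where
  "term_order l ord \<longleftrightarrow>
     (\<forall>m\<in>mon_set l. ord m m) \<and>
     (\<forall>m\<in>mon_set l. \<forall>m'\<in>mon_set l. ord m m' \<and> ord m' m \<longrightarrow> m = m') \<and>
     (\<forall>m\<in>mon_set l. \<forall>m'\<in>mon_set l. \<forall>m''\<in>mon_set l. ord m m' \<and> ord m' m'' \<longrightarrow> ord m m'') \<and>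
     (\<forall>m\<in>mon_set l. \<forall>m'\<in>mon_set l. ord m m' \<or> ord m' m) \<and>
     (\<forall>m\<in>mon_set l. ord 0 m) \<and>
     (\<forall>m\<in>mon_set l. \<forall>m'\<in>mon_set l. \<forall>k\<in>mon_set l. ord m m' \<longrightarrow> ord (m + k) (m' + k))"

definition LT :: "(mono \<Rightarrow> mono \<Rightarrow> bool) \<Rightarrow> zpoly \<Rightarrow> mono" where
  "LT ord f = (THE m. m \<in> Poly_Mapping.keys f \<and> (\<forall>m'\<in>Poly_Mapping.keys f. ord m' m))"

definition LC :: "(mono \<Rightarrow> mono \<Rightarrow> bool) \<Rightarrow> zpoly \<Rightarrow> int" where
  "LC ord f = Poly_Mapping.lookup f (LT ord f)"

definition LM :: "(mono \<Rightarrow> mono \<Rightarrow> bool) \<Rightarrow> zpoly \<Rightarrow> zpoly" where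
  "LM ord f = Poly_Mapping.single (LT ord f) (LC ord f)"

definition pdvd :: "nat \<Rightarrow> zpoly \<Rightarrow> zpoly \<Rightarrow> bool" where
  "pdvd l g f \<longleftrightarrow> (\<exists>q\<in>zpolys l. f = q * g)"

definition min_strong_GB :: "nat \<Rightarrow> (mono \<Rightarrow> mono \<Rightarrow> bool) \<Rightarrow> zpoly set \<Rightarrow> zpoly set \<Rightarrow> bool" where
  "min_strong_GB l ord I G \<longleftrightarrow>
     finite G \<and> 0 \<notin> G \<and> G \<subseteq> I \<and> ideal_gen l G = I \<and>
     (\<forall>f\<in>I. f \<noteq> 0 \<longrightarrow> (\<exists>g\<in>G. pdvd l (LM ord g) (LM ord f))) \<and>
     (\<forall>g\<in>G. \<forall>g'\<in>G. g \<noteq> g' \<longrightarrow> \<not> pdvd l (LM ord g) (LM ord g'))"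

definition lucky :: "nat \<Rightarrow> (mono \<Rightarrow> mono \<Rightarrow> bool) \<Rightarrow> zpoly set \<Rightarrow> int \<Rightarrow> bool" where
  "lucky l ord I p \<longleftrightarrow> (\<exists>G. min_strong_GB l ord I G \<and> (\<forall>g\<in>G. \<not> p dvd LC ord g))"

text \<open>Arrangements. The hyperplane H_i = {alpha_i = 0} in Q^l (vectors x :: nat => rat,
  zero outside {0..<l}) and its reduction (H_i)_p in F_p^l (F_p = {0..p-1} with arithmetic mod p).\<close>
definition hyp :: "nat \<Rightarrow> (nat \<Rightarrow> nat \<Rightarrow> int) \<Rightarrow> nat \<Rightarrow> (nat \<Rightarrow> rat) set" where
  "hyp l a i = {x. (\<forall>k\<ge>l. x k = 0) \<and> (\<Sum>k<l. of_int (a i k) * x k) = 0}"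

definition hyp_p :: "nat \<Rightarrow> int \<Rightarrow> (nat \<Rightarrow> nat \<Rightarrow> int) \<Rightarrow> nat \<Rightarrow> (nat \<Rightarrow> int) set" where
  "hyp_p l p a i = {x. (\<forall>k<l. 0 \<le> x k \<and> x k < p) \<and> (\<forall>k\<ge>l. x k = 0) \<and>
                        (\<Sum>k<l. a i k * x k) mod p = 0}"

definition arrangement :: "nat \<Rightarrow> nat \<Rightarrow> (nat \<Rightarrow> nat \<Rightarrow> int) \<Rightarrow> bool" where
  "arrangement l n a \<longleftrightarrow>
     (\<forall>i<n. \<forall>q::int. prime q \<longrightarrow> \<not> (\<forall>k<l. q dvd a i k)) \<and>
     (\<forall>i<n. \<forall>j<n. i \<noteq> j \<longrightarrow> hyp l a i \<noteq> hyp l a j) \<and>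
     (\<Inter>i\<in>{..<n}. hyp l a i) = {(\<lambda>_. 0)}"

definition good_prime :: "nat \<Rightarrow> nat \<Rightarrow> (nat \<Rightarrow> nat \<Rightarrow> int) \<Rightarrow> int \<Rightarrow> bool" where
  "good_prime l n a p \<longleftrightarrow> prime p \<and>
     (\<forall>i<n. \<forall>j<n. i \<noteq> j \<longrightarrow> \<not> (\<exists>c::int. \<forall>k<l. a i k mod p = (c * a j k) mod p))"

text \<open>Membership of an increasing l-tuple s(0)<...<s(l-1) of indices in the set I(A),
  resp. I(A_p): the intersection of the chosen hyperplanes has dimension 0, i.e. is {0}.\<close>
definition in_frakI :: "nat \<Rightarrow> (nat \<Rightarrow> nat \<Rightarrow> int) \<Rightarrow> (nat \<Rightarrow> nat) \<Rightarrow> bool" where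
  "in_frakI l a s \<longleftrightarrow> (\<Inter>t\<in>{..<l}. hyp l a (s t)) = {(\<lambda>_. 0)}"

definition in_frakI_p :: "nat \<Rightarrow> int \<Rightarrow> (nat \<Rightarrow> nat \<Rightarrow> int) \<Rightarrow> (nat \<Rightarrow> nat) \<Rightarrow> bool" where
  "in_frakI_p l p a s \<longleftrightarrow> (\<Inter>t\<in>{..<l}. hyp_p l p a (s t)) = {(\<lambda>_. 0)}"

end

theory Submission
  imports Defs "Jordan_Normal_Form.Determinant"
begin

(* Both sides are equivalent to D = det (a (i_t) k) being nonzero. Over Q this is linear algebra.
   If D = 0, an integer kernel vector with an entry not divisible by p reduces to a nonzero common
   zero mod p. If D is nonzero, the adjugate matrix shows D x_k \<in> I_Z for every k. Given a nonzero
   common zero v mod p, let x_k be the sigma-least variable with v_k nonzero. Elements of I_Z have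
   no constant term, so an element g of a minimal strong Groebner basis whose leading monomial
   divides D x_k has leading term x_k, and all other variables occurring linearly in g are
   sigma-smaller. The linear part of g is an integer combination of the alpha_(i_t), so evaluating
   it at v gives LC(g) v_k = 0 mod p, which contradicts luckiness. *)

section \<open>Linear coefficients of polynomials\<close>

definition var_mono :: "nat \<Rightarrow> mono" where
  "var_mono j = Poly_Mapping.single j 1"

lemma var_mono_neq_zero [simp]: "var_mono j \<noteq> 0"
  unfolding var_mono_def by (metis lookup_single_eq lookup_zero one_neq_zero)

lemma var_mono_eq_iff [simp]: "var_mono i = var_mono j \<longleftrightarrow> i = j"
  unfolding var_mono_def by (metis lookup_single_eq lookup_single_not_eq zero_neq_one)

lemma var_mono_in_mon_set: "j < l \<Longrightarrow> var_mono j \<in> mon_set l"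
  unfolding var_mono_def mon_set_def by simp

lemma mono_add_eq_zero_iff: "u + w = (0::mono) \<longleftrightarrow> u = 0 \<and> w = 0"
  by (metis add_0 poly_mapping_eq_iff lookup_add lookup_zero add_is_0 ext)

lemma mono_add_eq_var_mono_iff:
  "u + w = var_mono j \<longleftrightarrow> u = 0 \<and> w = var_mono j \<or> u = var_mono j \<and> w = 0"
proof
  assume sum: "u + w = var_mono j"
  have lookups: "Poly_Mapping.lookup u i + Poly_Mapping.lookup w i = (1 when j = i)" for i
    using arg_cong[OF sum, of "\<lambda>m. Poly_Mapping.lookup m i"] by (simp add: var_mono_def lookup_add lookup_single)
  have "m = Poly_Mapping.single j (Poly_Mapping.lookup m j)" if "m = u \<or> m = w" for m
  proof (rule poly_mapping_eqI)
    fix i show "Poly_Mapping.lookup m i = Poly_Mapping.lookup (Poly_Mapping.single j (Poly_Mapping.lookup m j)) i"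
      using that lookups[of i] by (cases "i = j") (auto simp: lookup_single)
  qed
  moreover have "Poly_Mapping.lookup u j = 0 \<and> Poly_Mapping.lookup w j = 1 \<or>
                  Poly_Mapping.lookup u j = 1 \<and> Poly_Mapping.lookup w j = 0"
    using lookups[of j] by auto
  ultimately show "u = 0 \<and> w = var_mono j \<or> u = var_mono j \<and> w = 0"
    unfolding var_mono_def by (metis single_zero)
qed auto

lemma lookup_mult_at_zero:
  fixes f g :: "mono \<Rightarrow>\<^sub>0 'a::semiring_0"
  shows "Poly_Mapping.lookup (f * g) 0 = Poly_Mapping.lookup f 0 * Poly_Mapping.lookup g 0"
proof -
  have "Sum_any (\<lambda>q. Poly_Mapping.lookup g q when 0 = u + q) = (Poly_Mapping.lookup g 0 when u = 0)" for u
    by (simp add: mono_add_eq_zero_iff when_def)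
  then show ?thesis
    by (simp add: lookup_mult mult_when)
qed

lemma lookup_mult_at_var_mono:
  fixes f g :: "mono \<Rightarrow>\<^sub>0 'a::semiring_0"
  assumes "Poly_Mapping.lookup g 0 = 0"
  shows "Poly_Mapping.lookup (f * g) (var_mono j) = Poly_Mapping.lookup f 0 * Poly_Mapping.lookup g (var_mono j)"
proof -
  have "Sum_any (\<lambda>q. Poly_Mapping.lookup g q when var_mono j = u + q) =
          (Poly_Mapping.lookup g (var_mono j) when u = 0)" for u
  proof -
    have split: "var_mono j = u + q \<longleftrightarrow> u = 0 \<and> q = var_mono j \<or> u = var_mono j \<and> q = 0" for q
      by (subst eq_commute) (rule mono_add_eq_var_mono_iff)
    have "(\<lambda>q. Poly_Mapping.lookup g q when var_mono j = u + q) =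
          (\<lambda>q. (Poly_Mapping.lookup g q when q = var_mono j) when u = 0)"
      using assms by (auto simp: split when_def)
    then show ?thesis
      by (simp only: Sum_any_when_independent Sum_any_when_equal)
  qed
  then show ?thesis
    by (simp add: lookup_mult mult_when)
qed

lemma single_sum: "Poly_Mapping.single m (sum f A) = (\<Sum>x\<in>A. Poly_Mapping.single m (f x))"
  by (induction A rule: infinite_finite_induct) (simp_all add: single_add)

lemma lin_form_eq_sum_single: "lin_form l a i = (\<Sum>k<l. Poly_Mapping.single (var_mono k) (a i k))"
  unfolding lin_form_def var_def var_mono_def by (simp add: mult_single)

lemma lookup_lin_form_zero: "Poly_Mapping.lookup (lin_form l a i) 0 = 0"
  by (simp add: lin_form_eq_sum_single lookup_sum lookup_single)

lemma lookup_lin_form_var_mono: "j < l \<Longrightarrow> Poly_Mapping.lookup (lin_form l a i) (var_mono j) = a i j"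
  by (simp add: lin_form_eq_sum_single lookup_sum lookup_single when_def)

section \<open>The ideal generated by linear forms\<close>

lemma mon_set_add: "m \<in> mon_set l \<Longrightarrow> m' \<in> mon_set l \<Longrightarrow> m + m' \<in> mon_set l"
  unfolding mon_set_def using keys_add[of m m'] by blast

lemma zpolys_add: "f \<in> zpolys l \<Longrightarrow> g \<in> zpolys l \<Longrightarrow> f + g \<in> zpolys l"
  unfolding zpolys_def using keys_add[of f g] by blast

lemma zpolys_mult: "f \<in> zpolys l \<Longrightarrow> g \<in> zpolys l \<Longrightarrow> f * g \<in> zpolys l"
  unfolding zpolys_def using keys_mult[of f g] mon_set_add by blast

lemma zero_in_zpolys: "0 \<in> zpolys l"
  unfolding zpolys_def by simp

lemma zpolys_sum: "(\<And>x. x \<in> A \<Longrightarrow> f x \<in> zpolys l) \<Longrightarrow> sum f A \<in> zpolys l"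
  by (induction A rule: infinite_finite_induct) (auto intro: zpolys_add zero_in_zpolys)

lemma zpolys_single: "m \<in> mon_set l \<Longrightarrow> Poly_Mapping.single m c \<in> zpolys l"
  unfolding zpolys_def by simp

lemma constant_in_zpolys: "Poly_Mapping.single 0 c \<in> zpolys l"
  by (rule zpolys_single) (simp add: mon_set_def)

lemma lin_form_in_zpolys: "lin_form l a i \<in> zpolys l"
  unfolding lin_form_eq_sum_single by (intro zpolys_sum zpolys_single var_mono_in_mon_set) simp

lemma ideal_gen_subset_zpolys: "G \<subseteq> zpolys l \<Longrightarrow> ideal_gen l G \<subseteq> zpolys l"
  unfolding ideal_gen_def by (auto intro!: zpolys_sum zpolys_mult)

lemma sum_in_ideal_gen:
  assumes "finite T" and "\<And>t. t \<in> T \<Longrightarrow> q t \<in> zpolys l"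
  shows "(\<Sum>t\<in>T. q t * h t) \<in> ideal_gen l (h ` T)"
proof -
  define c where "c g = (\<Sum>t\<in>{t\<in>T. h t = g}. q t)" for g
  have "(\<Sum>g\<in>h ` T. c g * g) = (\<Sum>g\<in>h ` T. \<Sum>t\<in>{t\<in>T. h t = g}. q t * h t)"
    unfolding c_def sum_distrib_right by (intro sum.cong refl) auto
  also have "\<dots> = (\<Sum>t\<in>T. q t * h t)"
    using assms(1) by (rule sum.image_gen[symmetric])
  finally have "(\<Sum>t\<in>T. q t * h t) = (\<Sum>g\<in>h ` T. c g * g)" ..
  moreover have "c g \<in> zpolys l" for g
    unfolding c_def using assms(2) by (intro zpolys_sum) auto
  ultimately show ?thesis
    unfolding ideal_gen_def by blast
qed

lemma ideal_gen_lookup_zero: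
  assumes "\<forall>h\<in>G. Poly_Mapping.lookup h 0 = 0" and "f \<in> ideal_gen l G"
  shows "Poly_Mapping.lookup f 0 = 0"
proof -
  obtain c where "f = (\<Sum>h\<in>G. c h * h)"
    using assms(2) unfolding ideal_gen_def by blast
  then show ?thesis
    using assms(1) by (simp add: lookup_sum lookup_mult_at_zero)
qed

lemma ideal_gen_linear_coeffs_dvd:
  fixes v :: "nat \<Rightarrow> int"
  assumes "\<forall>h\<in>G. Poly_Mapping.lookup h 0 = 0"
    and "\<forall>h\<in>G. p dvd (\<Sum>j<l. Poly_Mapping.lookup h (var_mono j) * v j)"
    and "f \<in> ideal_gen l G"
  shows "p dvd (\<Sum>j<l. Poly_Mapping.lookup f (var_mono j) * v j)"
proof -
  obtain c where f: "f = (\<Sum>h\<in>G. c h * h)"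
    using assms(3) unfolding ideal_gen_def by blast
  have "(\<Sum>j<l. Poly_Mapping.lookup f (var_mono j) * v j) =
        (\<Sum>j<l. \<Sum>h\<in>G. Poly_Mapping.lookup (c h * h) (var_mono j) * v j)"
    by (simp add: f lookup_sum sum_distrib_right)
  also have "\<dots> = (\<Sum>h\<in>G. \<Sum>j<l. Poly_Mapping.lookup (c h * h) (var_mono j) * v j)"
    by (rule sum.swap)
  also have "\<dots> = (\<Sum>h\<in>G. Poly_Mapping.lookup (c h) 0 * (\<Sum>j<l. Poly_Mapping.lookup h (var_mono j) * v j))"
    using assms(1) by (intro sum.cong refl) (simp add: lookup_mult_at_var_mono sum_distrib_left mult.assoc)
  finally show ?thesis
    using assms(2) by (simp add: dvd_sum)
qed

section \<open>Leading terms\<close>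

lemma finite_ex_greatest_wrt:
  fixes r :: "'a \<Rightarrow> 'a \<Rightarrow> bool"
  assumes total: "\<And>x y. x \<in> S \<Longrightarrow> y \<in> S \<Longrightarrow> r x y \<or> r y x"
    and trans: "\<And>x y z. x \<in> S \<Longrightarrow> y \<in> S \<Longrightarrow> z \<in> S \<Longrightarrow> r x y \<Longrightarrow> r y z \<Longrightarrow> r x z"
    and "finite K" "K \<noteq> {}" "K \<subseteq> S"
  shows "\<exists>m\<in>K. \<forall>x\<in>K. r x m"
  using assms(3-5)
proof (induction K rule: finite_ne_induct)
  case (singleton x)
  then show ?case using total by blast
next
  case (insert x F)
  then obtain m where m: "m \<in> F" "\<forall>y\<in>F. r y m"
    by blast
  have "x \<in> S" "m \<in> S" "F \<subseteq> S"
    using insert.prems m(1) by auto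
  then consider "r m x" | "r x m"
    using total by blast
  then show ?case
  proof cases
    case 1
    then have "\<forall>y\<in>insert x F. r y x"
      using m trans total \<open>x \<in> S\<close> \<open>m \<in> S\<close> \<open>F \<subseteq> S\<close> by blast
    then show ?thesis by blast
  next
    case 2
    with m show ?thesis by blast
  qed
qed

lemma term_order_antisym:
  assumes "term_order l ord" "m \<in> mon_set l" "m' \<in> mon_set l" "ord m m'" "ord m' m"
  shows "m = m'"
proof -
  have "\<forall>m\<in>mon_set l. \<forall>m'\<in>mon_set l. ord m m' \<and> ord m' m \<longrightarrow> m = m'"
    using assms(1) unfolding term_order_def by (elim conjE)
  with assms(2-5) show ?thesis by blast
qed

lemma term_order_trans:
  assumes "term_order l ord" "m \<in> mon_set l" "m' \<in> mon_set l" "m'' \<in> mon_set l" "ord m m'" "ord m' m''"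
  shows "ord m m''"
proof -
  have "\<forall>m\<in>mon_set l. \<forall>m'\<in>mon_set l. \<forall>m''\<in>mon_set l. ord m m' \<and> ord m' m'' \<longrightarrow> ord m m''"
    using assms(1) unfolding term_order_def by (elim conjE)
  with assms(2-6) show ?thesis by blast
qed

lemma term_order_total:
  assumes "term_order l ord" "m \<in> mon_set l" "m' \<in> mon_set l"
  shows "ord m m' \<or> ord m' m"
proof -
  have "\<forall>m\<in>mon_set l. \<forall>m'\<in>mon_set l. ord m m' \<or> ord m' m"
    using assms(1) unfolding term_order_def by (elim conjE)
  with assms(2-3) show ?thesis by blast
qed

lemma LT_eqI:
  assumes "term_order l ord" "Poly_Mapping.keys f \<subseteq> mon_set l"
    and "m \<in> Poly_Mapping.keys f" "\<forall>m'\<in>Poly_Mapping.keys f. ord m' m"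
  shows "LT ord f = m"
  unfolding LT_def
proof (rule the_equality)
  fix m'' assume "m'' \<in> Poly_Mapping.keys f \<and> (\<forall>m'\<in>Poly_Mapping.keys f. ord m' m'')"
  then show "m'' = m"
    using assms(2-4) by (intro term_order_antisym[OF assms(1)]) auto
qed (use assms(3,4) in blast)

lemma LT_greatest:
  assumes "term_order l ord" "f \<in> zpolys l" "f \<noteq> 0"
  shows "LT ord f \<in> Poly_Mapping.keys f" and "m \<in> Poly_Mapping.keys f \<Longrightarrow> ord m (LT ord f)"
proof -
  have keys: "Poly_Mapping.keys f \<subseteq> mon_set l"
    using assms(2) unfolding zpolys_def by blast
  have "\<exists>m\<in>Poly_Mapping.keys f. \<forall>m'\<in>Poly_Mapping.keys f. ord m' m"
  proof (rule finite_ex_greatest_wrt[where S = "mon_set l"])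
    show "ord x y \<or> ord y x" if "x \<in> mon_set l" "y \<in> mon_set l" for x y
      using term_order_total[OF assms(1) that] .
    show "ord x z" if "x \<in> mon_set l" "y \<in> mon_set l" "z \<in> mon_set l" "ord x y" "ord y z" for x y z
      using term_order_trans[OF assms(1) that] .
  qed (use keys assms(3) in auto)
  then obtain t where t: "t \<in> Poly_Mapping.keys f" "\<forall>m'\<in>Poly_Mapping.keys f. ord m' t"
    by blast
  moreover have "LT ord f = t"
    using LT_eqI[OF assms(1) keys t] .
  ultimately show "LT ord f \<in> Poly_Mapping.keys f" and "m \<in> Poly_Mapping.keys f \<Longrightarrow> ord m (LT ord f)"
    by auto
qed

lemma LM_single:
  assumes "term_order l ord" "m \<in> mon_set l" "c \<noteq> 0"
  shows "LM ord (Poly_Mapping.single m c) = Poly_Mapping.single m c"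
proof -
  have "ord m m"
    using term_order_total[OF assms(1) assms(2) assms(2)] by blast
  then have "LT ord (Poly_Mapping.single m c) = m"
    using assms by (intro LT_eqI[OF assms(1)]) auto
  then show ?thesis
    unfolding LM_def LC_def by simp
qed

lemma pdvd_single_imp_exponent_add:
  assumes "pdvd l (Poly_Mapping.single u c) (Poly_Mapping.single m d)" "d \<noteq> 0"
  shows "\<exists>w. m = w + u"
proof -
  obtain q where eq: "Poly_Mapping.single m d = q * Poly_Mapping.single u c"
    using assms(1) unfolding pdvd_def by blast
  have "m \<in> Poly_Mapping.keys (q * Poly_Mapping.single u c)"
    unfolding eq[symmetric] using assms(2) by simp
  then show ?thesis
    using keys_mult[of q "Poly_Mapping.single u c"] by (auto split: if_splits)
qed

lemma LT_eq_var_mono_if_LM_dvd: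
  assumes ord: "term_order l ord" and g: "g \<in> zpolys l" "g \<noteq> 0" "Poly_Mapping.lookup g 0 = 0"
    and dvd: "pdvd l (LM ord g) (Poly_Mapping.single (var_mono k) d)" and "d \<noteq> 0"
  shows "LT ord g = var_mono k"
proof -
  obtain w where "var_mono k = w + LT ord g"
    using pdvd_single_imp_exponent_add[OF dvd[unfolded LM_def] \<open>d \<noteq> 0\<close>] by blast
  then have "LT ord g = 0 \<or> LT ord g = var_mono k"
    using mono_add_eq_var_mono_iff by metis
  moreover have "LT ord g \<noteq> 0"
    using LT_greatest(1)[OF ord g(1,2)] g(3) by (metis in_keys_iff)
  ultimately show ?thesis
    by blast
qed

lemma linear_coeffs_sum_eq_LC:
  fixes v :: "nat \<Rightarrow> int"
  assumes ord: "term_order l ord" and g: "g \<in> zpolys l" "g \<noteq> 0"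
    and LT_g: "LT ord g = var_mono k" and "k < l"
    and least: "\<And>j. j < l \<Longrightarrow> v j \<noteq> 0 \<Longrightarrow> ord (var_mono k) (var_mono j)"
  shows "(\<Sum>j<l. Poly_Mapping.lookup g (var_mono j) * v j) = LC ord g * v k"
proof -
  have off_k: "Poly_Mapping.lookup g (var_mono j) * v j = 0" if "j < l" "j \<noteq> k" for j
  proof (rule ccontr)
    assume "Poly_Mapping.lookup g (var_mono j) * v j \<noteq> 0"
    then have "ord (var_mono j) (var_mono k)" "ord (var_mono k) (var_mono j)"
      using LT_greatest(2)[OF ord g] LT_g least[OF \<open>j < l\<close>] by (auto simp: in_keys_iff)
    then have "var_mono j = var_mono k"
      using term_order_antisym[OF ord] var_mono_in_mon_set \<open>j < l\<close> \<open>k < l\<close> by blast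
    with \<open>j \<noteq> k\<close> show False
      by simp
  qed
  have "(\<Sum>j<l. Poly_Mapping.lookup g (var_mono j) * v j) =
        Poly_Mapping.lookup g (var_mono k) * v k + (\<Sum>j\<in>{..<l} - {k}. Poly_Mapping.lookup g (var_mono j) * v j)"
    using \<open>k < l\<close> by (simp add: sum.remove)
  also have "(\<Sum>j\<in>{..<l} - {k}. Poly_Mapping.lookup g (var_mono j) * v j) = 0"
    using off_k by (intro sum.neutral) blast
  finally show ?thesis
    unfolding LC_def LT_g by simp
qed

lemma ex_least_var_mono:
  assumes ord: "term_order l ord" and "j0 < l" "v j0 \<noteq> 0"
  shows "\<exists>k<l. v k \<noteq> 0 \<and> (\<forall>j<l. v j \<noteq> 0 \<longrightarrow> ord (var_mono k) (var_mono j))"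
proof -
  have "\<exists>k\<in>{j. j < l \<and> v j \<noteq> 0}. \<forall>j\<in>{j. j < l \<and> v j \<noteq> 0}. ord (var_mono k) (var_mono j)"
  proof (rule finite_ex_greatest_wrt[where S = "{..<l}" and r = "\<lambda>j k. ord (var_mono k) (var_mono j)"])
    show "ord (var_mono y) (var_mono x) \<or> ord (var_mono x) (var_mono y)" if "x \<in> {..<l}" "y \<in> {..<l}" for x y
      using term_order_total[OF ord] var_mono_in_mon_set that by simp
    show "ord (var_mono z) (var_mono x)"
      if "x \<in> {..<l}" "y \<in> {..<l}" "z \<in> {..<l}" "ord (var_mono y) (var_mono x)" "ord (var_mono z) (var_mono y)"
      for x y z
      using term_order_trans[OF ord] var_mono_in_mon_set that by (meson lessThan_iff)
  qed (use assms in auto)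
  then show ?thesis
    by blast
qed

section \<open>The coefficient matrix\<close>

definition coeff_mat :: "nat \<Rightarrow> (nat \<Rightarrow> nat \<Rightarrow> int) \<Rightarrow> (nat \<Rightarrow> nat) \<Rightarrow> int mat" where
  "coeff_mat l a s = mat l l (\<lambda>(t, k). a (s t) k)"

lemma coeff_mat_carrier [simp]: "coeff_mat l a s \<in> carrier_mat l l"
  unfolding coeff_mat_def by simp

lemma coeff_mat_mult_vec:
  "v \<in> carrier_vec l \<Longrightarrow> t < l \<Longrightarrow> (coeff_mat l a s *\<^sub>v v) $ t = (\<Sum>k<l. a (s t) k * v $ k)"
  unfolding coeff_mat_def by (simp add: scalar_prod_def atLeast0LessThan row_def)

lemma of_int_coeff_mat_mult_vec:
  "v \<in> carrier_vec l \<Longrightarrow> t < l \<Longrightarrow>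
    (map_mat of_int (coeff_mat l a s) *\<^sub>v v) $ t = (\<Sum>k<l. of_int (a (s t) k) * v $ k)"
  unfolding coeff_mat_def by (simp add: scalar_prod_def atLeast0LessThan row_def)

lemma hyp_iff_kernel_row:
  assumes "t < l"
  shows "x \<in> hyp l a (s t) \<longleftrightarrow>
    (\<forall>k\<ge>l. x k = 0) \<and> (map_mat rat_of_int (coeff_mat l a s) *\<^sub>v vec l x) $ t = 0"
  unfolding hyp_def using assms by (simp add: of_int_coeff_mat_mult_vec)

lemma in_frakI_imp_det_neq_zero:
  assumes frakI: "in_frakI l a s"
  shows "det (coeff_mat l a s) \<noteq> 0"
proof
  assume "det (coeff_mat l a s) = 0"
  then have "det (map_mat rat_of_int (coeff_mat l a s)) = 0"
    by simp
  then obtain v where v: "v \<in> carrier_vec l" "v \<noteq> 0\<^sub>v l" "map_mat rat_of_int (coeff_mat l a s) *\<^sub>v v = 0\<^sub>v l"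
    using det_0_iff_vec_prod_zero[of "map_mat rat_of_int (coeff_mat l a s)" l] by auto
  define x where "x k = (if k < l then v $ k else 0)" for k
  have vec_x: "vec l x = v"
    using v(1) unfolding x_def by (auto intro!: eq_vecI)
  have "x \<in> hyp l a (s t)" if "t < l" for t
    using that v(3) unfolding hyp_iff_kernel_row[OF that] vec_x by (simp add: x_def)
  then have "x = (\<lambda>_. 0)"
    using frakI unfolding in_frakI_def by blast
  then have "v = 0\<^sub>v l"
    using vec_x by auto
  with v(2) show False ..
qed

lemma det_neq_zero_imp_in_frakI:
  assumes det: "det (coeff_mat l a s) \<noteq> 0" and "0 < l"
  shows "in_frakI l a s"
proof -
  have "x = (\<lambda>_. 0)" if x: "\<forall>t<l. x \<in> hyp l a (s t)" for x :: "nat \<Rightarrow> rat"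
  proof -
    have beyond: "\<forall>k\<ge>l. x k = 0"
      using x \<open>0 < l\<close> unfolding hyp_def by blast
    have "map_mat rat_of_int (coeff_mat l a s) *\<^sub>v vec l x = 0\<^sub>v l"
    proof (rule eq_vecI)
      fix t assume "t < dim_vec (0\<^sub>v l :: rat vec)"
      then have "t < l" by simp
      then show "(map_mat rat_of_int (coeff_mat l a s) *\<^sub>v vec l x) $ t = 0\<^sub>v l $ t"
        using x \<open>t < l\<close> hyp_iff_kernel_row[OF \<open>t < l\<close>, of x a s] by simp
    qed (simp add: coeff_mat_def)
    moreover have "det (map_mat rat_of_int (coeff_mat l a s)) \<noteq> 0"
      using det by simp
    moreover have "map_mat rat_of_int (coeff_mat l a s) \<in> carrier_mat l l" "vec l x \<in> carrier_vec l"
      by simp_all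
    ultimately have "vec l x = 0\<^sub>v l"
      using det_0_iff_vec_prod_zero by blast
    then have "x k = 0" if "k < l" for k
      using that by (metis index_vec index_zero_vec(1))
    with beyond show ?thesis
      by (metis not_le)
  qed
  moreover have "(\<lambda>_. 0) \<in> hyp l a i" for i
    unfolding hyp_def by simp
  ultimately show ?thesis
    unfolding in_frakI_def by blast
qed

lemma ex_kernel_vec_not_all_dvd:
  fixes A :: "int mat" and p :: int
  assumes A: "A \<in> carrier_mat n m" and p: "1 < p"
    and v: "v \<in> carrier_vec m" "v \<noteq> 0\<^sub>v m" "A *\<^sub>v v = 0\<^sub>v n"
  shows "\<exists>w\<in>carrier_vec m. A *\<^sub>v w = 0\<^sub>v n \<and> (\<exists>k<m. \<not> p dvd w $ k)"
proof -
  obtain k where k: "k < m" "v $ k \<noteq> 0"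
    using v(1,2) by (metis eq_vecI carrier_vecD index_zero_vec)
  show ?thesis
    using v(1,3) k(2)
  proof (induction "nat \<bar>v $ k\<bar>" arbitrary: v rule: less_induct)
    case less
    show ?case
    proof (cases "\<forall>j<m. p dvd v $ j")
      case True
      define w where "w = vec m (\<lambda>j. v $ j div p)"
      have w: "w \<in> carrier_vec m" and v_eq: "v = p \<cdot>\<^sub>v w"
        using True less.prems(1) unfolding w_def by (auto intro!: eq_vecI)
      have "A *\<^sub>v w = 0\<^sub>v n"
      proof (rule eq_vecI)
        fix i assume i: "i < dim_vec (0\<^sub>v n :: int vec)"
        then have "p * (A *\<^sub>v w) $ i = (A *\<^sub>v v) $ i"
          using A w unfolding v_eq by simp
        then show "(A *\<^sub>v w) $ i = 0\<^sub>v n $ i"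
          using less.prems(2) i p by simp
      qed (use A in simp)
      moreover have "w $ k \<noteq> 0" "nat \<bar>w $ k\<bar> < nat \<bar>v $ k\<bar>"
        using less.prems(3) p k(1) w unfolding v_eq by (auto simp: abs_mult)
      ultimately show ?thesis
        using less.hyps[of w] w by blast
    qed (use less.prems in blast)
  qed
qed

lemma in_frakI_p_imp_det_neq_zero:
  assumes p: "1 < p" and frakI_p: "in_frakI_p l p a s"
  shows "det (coeff_mat l a s) \<noteq> 0"
proof
  assume "det (coeff_mat l a s) = 0"
  then obtain v where "v \<in> carrier_vec l" "v \<noteq> 0\<^sub>v l" "coeff_mat l a s *\<^sub>v v = 0\<^sub>v l"
    using det_0_iff_vec_prod_zero[OF coeff_mat_carrier] by auto
  then obtain w k where w: "w \<in> carrier_vec l" "coeff_mat l a s *\<^sub>v w = 0\<^sub>v l"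
    and k: "k < l" "\<not> p dvd w $ k"
    using ex_kernel_vec_not_all_dvd[OF coeff_mat_carrier p] by blast
  define x where "x j = (if j < l then w $ j mod p else 0)" for j
  have "x \<in> hyp_p l p a (s t)" if t: "t < l" for t
  proof -
    have "(\<Sum>j<l. a (s t) j * x j) mod p = (\<Sum>j<l. a (s t) j * (w $ j mod p) mod p) mod p"
      unfolding x_def by (simp add: mod_sum_eq)
    also have "\<dots> = (\<Sum>j<l. a (s t) j * w $ j) mod p"
      by (simp add: mod_mult_right_eq mod_sum_eq)
    also have "\<dots> = 0"
      using w t coeff_mat_mult_vec[OF w(1) t, of a s] by simp
    finally show ?thesis
      unfolding hyp_p_def x_def using p by simp
  qed
  then have "x = (\<lambda>_. 0)"
    using frakI_p unfolding in_frakI_p_def by blast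
  then have "w $ k mod p = 0"
    using k(1) unfolding x_def by (metis (mono_tags))
  with k(2) show False
    by (simp add: dvd_eq_mod_eq_0)
qed

lemma det_var_mono_in_ideal:
  assumes "k < l"
  shows "Poly_Mapping.single (var_mono k) (det (coeff_mat l a s)) \<in> ideal_gen l (lin_form l a ` s ` {..<l})"
proof -
  let ?M = "coeff_mat l a s"
  define adj where "adj = adj_mat ?M"
  have adj_carrier: "adj \<in> carrier_mat l l"
    unfolding adj_def by (rule adj_mat(1)[OF coeff_mat_carrier])
  have adj_row: "(\<Sum>t<l. adj $$ (k, t) * a (s t) j) = (if k = j then det ?M else 0)" if "j < l" for j
  proof -
    have "(adj * ?M) $$ (k, j) = (det ?M \<cdot>\<^sub>m 1\<^sub>m l) $$ (k, j)"
      using adj_mat(3)[OF coeff_mat_carrier] unfolding adj_def by simp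
    moreover have "(adj * ?M) $$ (k, j) = (\<Sum>t<l. adj $$ (k, t) * a (s t) j)"
      using adj_carrier assms that
      by (simp add: coeff_mat_def scalar_prod_def atLeast0LessThan)
    ultimately show ?thesis
      using assms that by simp
  qed
  have "(\<Sum>t<l. Poly_Mapping.single 0 (adj $$ (k, t)) * lin_form l a (s t)) =
        (\<Sum>t<l. \<Sum>j<l. Poly_Mapping.single (var_mono j) (adj $$ (k, t) * a (s t) j))"
    by (simp add: lin_form_eq_sum_single sum_distrib_left mult_single)
  also have "\<dots> = (\<Sum>j<l. Poly_Mapping.single (var_mono j) (\<Sum>t<l. adj $$ (k, t) * a (s t) j))"
    by (subst sum.swap) (simp add: single_sum)
  also have "\<dots> = (\<Sum>j<l. if k = j then Poly_Mapping.single (var_mono j) (det ?M) else 0)"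
    by (intro sum.cong refl) (simp add: adj_row)
  also have "\<dots> = Poly_Mapping.single (var_mono k) (det ?M)"
    using assms by simp
  finally have "Poly_Mapping.single (var_mono k) (det ?M) =
      (\<Sum>t<l. Poly_Mapping.single 0 (adj $$ (k, t)) * lin_form l a (s t))" ..
  also have "\<dots> \<in> ideal_gen l ((\<lambda>t. lin_form l a (s t)) ` {..<l})"
    by (rule sum_in_ideal_gen) (simp_all add: constant_in_zpolys)
  finally show ?thesis
    by (simp add: image_image)
qed

section \<open>Reduction modulo a lucky prime\<close>

lemma lucky_prime_dvd_least_coordinate:
  fixes v :: "nat \<Rightarrow> int"
  assumes ord: "term_order l ord" and p: "prime p"
    and lucky: "lucky l ord (ideal_gen l (lin_form l a ` s ` {..<l})) p"
    and det: "det (coeff_mat l a s) \<noteq> 0" and "k < l"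
    and v: "\<forall>t<l. p dvd (\<Sum>j<l. a (s t) j * v j)"
    and least: "\<And>j. j < l \<Longrightarrow> v j \<noteq> 0 \<Longrightarrow> ord (var_mono k) (var_mono j)"
  shows "p dvd v k"
proof -
  define gens where "gens = lin_form l a ` s ` {..<l}"
  define I where "I = ideal_gen l gens"
  have no_const: "\<forall>h\<in>gens. Poly_Mapping.lookup h 0 = 0"
    unfolding gens_def using lookup_lin_form_zero by blast
  let ?f = "Poly_Mapping.single (var_mono k) (det (coeff_mat l a s))"
  have "?f \<in> I"
    using det_var_mono_in_ideal[OF \<open>k < l\<close>] unfolding I_def gens_def .
  moreover have "?f \<noteq> 0"
    using det by (metis lookup_single_eq lookup_zero)
  moreover obtain B where B: "min_strong_GB l ord I B" "\<forall>g\<in>B. \<not> p dvd LC ord g"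
    using lucky unfolding lucky_def I_def gens_def by blast
  ultimately obtain g where "g \<in> B" "pdvd l (LM ord g) (LM ord ?f)"
    unfolding min_strong_GB_def by blast
  then have g: "g \<in> I" "g \<noteq> 0" "pdvd l (LM ord g) ?f" "\<not> p dvd LC ord g"
    using B LM_single[OF ord var_mono_in_mon_set[OF \<open>k < l\<close>] det] unfolding min_strong_GB_def by auto
  have g_zpolys: "g \<in> zpolys l"
    using g(1) ideal_gen_subset_zpolys[of gens l] lin_form_in_zpolys unfolding I_def gens_def by blast
  have LT_g: "LT ord g = var_mono k"
    using LT_eq_var_mono_if_LM_dvd[OF ord g_zpolys g(2) _ g(3) det] ideal_gen_lookup_zero[OF no_const] g(1)
    unfolding I_def by blast
  have "p dvd (\<Sum>j<l. Poly_Mapping.lookup g (var_mono j) * v j)"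
  proof (rule ideal_gen_linear_coeffs_dvd[OF no_const])
    show "\<forall>h\<in>gens. p dvd (\<Sum>j<l. Poly_Mapping.lookup h (var_mono j) * v j)"
      using v unfolding gens_def by (auto simp: lookup_lin_form_var_mono)
  qed (use g(1) in \<open>simp add: I_def\<close>)
  then have "p dvd LC ord g * v k"
    using linear_coeffs_sum_eq_LC[OF ord g_zpolys g(2) LT_g \<open>k < l\<close> least] by simp
  with g(4) p show ?thesis
    by (simp add: prime_dvd_mult_iff)
qed

lemma det_neq_zero_imp_in_frakI_p:
  assumes ord: "term_order l ord" and p: "prime p"
    and lucky: "lucky l ord (ideal_gen l (lin_form l a ` s ` {..<l})) p"
    and det: "det (coeff_mat l a s) \<noteq> 0" and "0 < l"
  shows "in_frakI_p l p a s"
proof (rule ccontr)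
  assume "\<not> in_frakI_p l p a s"
  moreover have "(\<lambda>_. 0) \<in> hyp_p l p a i" for i
    unfolding hyp_p_def using prime_gt_0_int[OF p] by simp
  ultimately obtain v where v: "\<forall>t<l. v \<in> hyp_p l p a (s t)" "v \<noteq> (\<lambda>_. 0)"
    unfolding in_frakI_p_def by blast
  then have v_range: "\<forall>j<l. 0 \<le> v j \<and> v j < p" and "\<forall>j\<ge>l. v j = 0"
    using \<open>0 < l\<close> unfolding hyp_p_def by blast+
  then obtain j0 where "j0 < l" "v j0 \<noteq> 0"
    using v(2) by (metis not_le ext)
  then obtain k where k: "k < l" "v k \<noteq> 0"
    and least: "\<And>j. j < l \<Longrightarrow> v j \<noteq> 0 \<Longrightarrow> ord (var_mono k) (var_mono j)"
    using ex_least_var_mono[OF ord] by blast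
  have "\<forall>t<l. p dvd (\<Sum>j<l. a (s t) j * v j)"
    using v(1) unfolding hyp_p_def by (simp add: dvd_eq_mod_eq_0)
  then have "p dvd v k"
    using lucky_prime_dvd_least_coordinate[OF ord p lucky det k(1) _ least] by blast
  moreover have "0 < v k"
    using v_range k by fastforce
  ultimately have "p \<le> v k"
    by (rule zdvd_imp_le)
  with v_range k(1) show False
    by auto
qed

theorem proposition4p11:
  fixes l n :: nat and a :: "nat \<Rightarrow> nat \<Rightarrow> int" and s :: "nat \<Rightarrow> nat"
    and ord :: "mono \<Rightarrow> mono \<Rightarrow> bool" and p :: int
  assumes "arrangement l n a"
    and "\<forall>t t'. t < t' \<and> t' < l \<longrightarrow> s t < s t'"
    and "\<forall>t<l. s t < n"
    and "term_order l ord"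
    and "good_prime l n a p"
    and "lucky l ord (ideal_gen l (lin_form l a ` s ` {..<l})) p"
  shows "in_frakI l a s \<longleftrightarrow> in_frakI_p l p a s"
proof (cases "l = 0")
  case True
  have "(\<lambda>_. 1) \<notin> {\<lambda>_. 0 :: rat}" "(\<lambda>_. 1) \<notin> {\<lambda>_. 0 :: int}"
    by (simp_all add: fun_eq_iff)
  then show ?thesis
    unfolding in_frakI_def in_frakI_p_def True by auto
next
  case False
  have p: "prime p"
    using assms(5) unfolding good_prime_def by blast
  show ?thesis
  proof
    assume "in_frakI l a s"
    then have "det (coeff_mat l a s) \<noteq> 0"
      by (rule in_frakI_imp_det_neq_zero)
    with False show "in_frakI_p l p a s"
      using det_neq_zero_imp_in_frakI_p[OF assms(4) p assms(6)] by blast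
  next
    assume "in_frakI_p l p a s"
    then have "det (coeff_mat l a s) \<noteq> 0"
      using in_frakI_p_imp_det_neq_zero prime_gt_1_int[OF p] by blast
    with False show "in_frakI l a s"
      using det_neq_zero_imp_in_frakI by blast
  qed
qed

end
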